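(* Let $\mathbb{K}=\mathbb{R}$ or $\mathbb{C}$, let $(V,W_\ast)$ be a finite-dimensional $\mathbb{K}$-vector space with an increasing filtration, and let $\phi:A_1^\ast\to A_2^\ast$ be a morphism of cohomologically connected DGAs over $\mathbb{K}$ inducing isomorphisms on $0$-th and first cohomology. Then the induced functors $F(\phi):F^{nil}(A_1^\ast,V,W_\ast)\to F^{nil}(A_2^\ast,V,W_\ast)$ and $F_{gr}(\phi):F^{nil}_{gr}(A_1^\ast,V,W_\ast)\to F^{nil}_{gr}(A_2^\ast,V,W_\ast)$ are fully faithful.
   Context: A DGA $A^\ast$ is cohomologically connected if $H^0(A^\ast)\cong\mathbb{K}$. $W_k(\mathrm{End}(V))$ denotes the endomorphisms $f$ with $f(W_i V)\subset W_{i+k}V$ for all $i$. The category $F^{nil}(A^\ast,V,W_\ast)$ has objects $\omega\in A^1\otimes W_{-1}(\mathrm{End}(V))$ with $d\omega+\frac12[\omega,\omega]=0$, and morphisms from $\omega_1$ to $\omega_2$ the elements $a\in A^0\otimes W_0(\mathrm{End}(V))$ with $da+\omega_1a-a\omega_2=0$. The category $F^{nil}_{gr}(A^\ast,V,W_\ast)$ has the same objects, and morphisms from $\omega_1$ to $\omega_2$ the elements $a\in\mathrm{Id}_V+A^0\otimes W_{-1}(\mathrm{End}(V))$ with $da+\omega_1a-a\omega_2=0$. The functors $F(\phi),F_{gr}(\phi)$ apply $\phi\otimes\mathrm{id}$ to objects and morphisms. *)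

theory Defs
  imports "HOL-Analysis.Analysis"
begin

text \<open>A unital K-algebra is a ring 'a together with a ring homomorphism
  iota : K -> 'a with central image (scalar multiplication c.x = iota c * x).
  A DGA A^* is given by its graded pieces A i (i = 0,1,2,...) inside the ambient
  ring 'a, which is required to be the direct sum of the A i, and the
  differential d.\<close>

definition dga :: "('k::field \<Rightarrow> 'a::ring_1) \<Rightarrow> (nat \<Rightarrow> 'a set) \<Rightarrow> ('a \<Rightarrow> 'a) \<Rightarrow> bool" where
  "dga \<iota> A d \<longleftrightarrow>
     (\<forall>x y. \<iota> (x + y) = \<iota> x + \<iota> y) \<and> (\<forall>x y. \<iota> (x * y) = \<iota> x * \<iota> y) \<and> \<iota> 1 = 1 \<and>
     (\<forall>c x. \<iota> c * x = x * \<iota> c) \<and>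
     (\<forall>i. 0 \<in> A i \<and> (\<forall>x\<in>A i. \<forall>y\<in>A i. x + y \<in> A i) \<and> (\<forall>c. \<forall>x\<in>A i. \<iota> c * x \<in> A i)) \<and>
     (\<forall>i j. \<forall>x\<in>A i. \<forall>y\<in>A j. x * y \<in> A (i + j)) \<and>
     1 \<in> A 0 \<and>
     (\<forall>x. \<exists>f N. (\<forall>i. f i \<in> A i) \<and> x = (\<Sum>i<N. f i)) \<and>
     (\<forall>f N. (\<forall>i. f i \<in> A i) \<and> (\<Sum>i<N. f i) = 0 \<longrightarrow> (\<forall>i<N. f i = 0)) \<and>
     (\<forall>x y. d (x + y) = d x + d y) \<and> (\<forall>c x. d (\<iota> c * x) = \<iota> c * d x) \<and>
     (\<forall>i. \<forall>x\<in>A i. d x \<in> A (Suc i)) \<and>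
     (\<forall>x. d (d x) = 0) \<and>
     (\<forall>i. \<forall>x\<in>A i. \<forall>y. d (x * y) = d x * y + (-1) ^ i * x * d y) \<and>
     (\<forall>i j. \<forall>x\<in>A i. \<forall>y\<in>A j. x * y = (-1) ^ (i * j) * (y * x))"

definition dga_hom ::
  "('k::field \<Rightarrow> 'a::ring_1) \<Rightarrow> (nat \<Rightarrow> 'a set) \<Rightarrow> ('a \<Rightarrow> 'a) \<Rightarrow>
   ('k \<Rightarrow> 'b::ring_1) \<Rightarrow> (nat \<Rightarrow> 'b set) \<Rightarrow> ('b \<Rightarrow> 'b) \<Rightarrow> ('a \<Rightarrow> 'b) \<Rightarrow> bool" where
  "dga_hom \<iota>1 A1 d1 \<iota>2 A2 d2 \<phi> \<longleftrightarrow>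
     (\<forall>x y. \<phi> (x + y) = \<phi> x + \<phi> y) \<and> (\<forall>x y. \<phi> (x * y) = \<phi> x * \<phi> y) \<and> \<phi> 1 = 1 \<and>
     (\<forall>c. \<phi> (\<iota>1 c) = \<iota>2 c) \<and>
     (\<forall>i. \<phi> ` A1 i \<subseteq> A2 i) \<and>
     (\<forall>x. \<phi> (d1 x) = d2 (\<phi> x))"

definition cocycles :: "(nat \<Rightarrow> 'a::ring_1 set) \<Rightarrow> ('a \<Rightarrow> 'a) \<Rightarrow> nat \<Rightarrow> 'a set" where
  "cocycles A d i = {x \<in> A i. d x = 0}"

fun coboundaries :: "(nat \<Rightarrow> 'a::ring_1 set) \<Rightarrow> ('a \<Rightarrow> 'a) \<Rightarrow> nat \<Rightarrow> 'a set" where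
  "coboundaries A d 0 = {0}"
| "coboundaries A d (Suc i) = d ` A i"

text \<open>H^0(A) = Z^0(A) is isomorphic to K as a K-vector space.\<close>
definition cohom_connected :: "('k::field \<Rightarrow> 'a::ring_1) \<Rightarrow> (nat \<Rightarrow> 'a set) \<Rightarrow> ('a \<Rightarrow> 'a) \<Rightarrow> bool" where
  "cohom_connected \<iota> A d \<longleftrightarrow>
     (\<exists>f. bij_betw f (UNIV :: 'k set) (cocycles A d 0) \<and>
          (\<forall>x y. f (x + y) = f x + f y) \<and> (\<forall>c x. f (c * x) = \<iota> c * f x))"

definition induces_cohom_iso ::
  "(nat \<Rightarrow> 'a::ring_1 set) \<Rightarrow> ('a \<Rightarrow> 'a) \<Rightarrow> (nat \<Rightarrow> 'b::ring_1 set) \<Rightarrow> ('b \<Rightarrow> 'b) \<Rightarrow>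
   ('a \<Rightarrow> 'b) \<Rightarrow> nat \<Rightarrow> bool" where
  "induces_cohom_iso A1 d1 A2 d2 \<phi> i \<longleftrightarrow>
     (\<forall>x\<in>cocycles A1 d1 i. \<phi> x \<in> coboundaries A2 d2 i \<longrightarrow> x \<in> coboundaries A1 d1 i) \<and>
     (\<forall>y\<in>cocycles A2 d2 i. \<exists>x\<in>cocycles A1 d1 i. \<phi> x - y \<in> coboundaries A2 d2 i)"

definition is_subspace :: "('n \<Rightarrow> 'k::field) set \<Rightarrow> bool" where
  "is_subspace S \<longleftrightarrow> (\<lambda>_. 0) \<in> S \<and> (\<forall>u\<in>S. \<forall>v\<in>S. (\<lambda>p. u p + v p) \<in> S) \<and>
     (\<forall>c. \<forall>v\<in>S. (\<lambda>p. c * v p) \<in> S)"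

definition incr_filtration :: "(int \<Rightarrow> ('n \<Rightarrow> 'k::field) set) \<Rightarrow> bool" where
  "incr_filtration W \<longleftrightarrow> (\<forall>i. is_subspace (W i)) \<and> (\<forall>i. W i \<subseteq> W (i + 1)) \<and>
     (\<exists>a b. W a = {\<lambda>_. 0} \<and> W b = UNIV)"

definition endo_apply :: "('n::finite \<Rightarrow> 'n \<Rightarrow> 'k::field) \<Rightarrow> ('n \<Rightarrow> 'k) \<Rightarrow> ('n \<Rightarrow> 'k)" where
  "endo_apply E v = (\<lambda>p. \<Sum>q\<in>UNIV. E p q * v q)"

definition W_End :: "(int \<Rightarrow> ('n::finite \<Rightarrow> 'k::field) set) \<Rightarrow> int \<Rightarrow> ('n \<Rightarrow> 'n \<Rightarrow> 'k) set" where
  "W_End W k = {E. \<forall>i. \<forall>v\<in>W i. endo_apply E v \<in> W (i + k)}"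

text \<open>S \<otimes> T inside A \<otimes> End(V): finite sums of elementary tensors a \<otimes> E.\<close>
definition tensor :: "('k::field \<Rightarrow> 'a::ring_1) \<Rightarrow> 'a set \<Rightarrow> ('n \<Rightarrow> 'n \<Rightarrow> 'k) set \<Rightarrow> ('n \<Rightarrow> 'n \<Rightarrow> 'a) set" where
  "tensor \<iota> S T = {M. \<exists>xs. (\<forall>(a, E)\<in>set xs. a \<in> S \<and> E \<in> T) \<and>
       M = (\<lambda>p q. sum_list (map (\<lambda>(a, E). a * \<iota> (E p q)) xs))}"

definition mat_mult :: "('n::finite \<Rightarrow> 'n \<Rightarrow> 'a::ring_1) \<Rightarrow> ('n \<Rightarrow> 'n \<Rightarrow> 'a) \<Rightarrow> ('n \<Rightarrow> 'n \<Rightarrow> 'a)" where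
  "mat_mult M N = (\<lambda>p q. \<Sum>r\<in>UNIV. M p r * N r q)"

definition mat_bracket :: "nat \<Rightarrow> nat \<Rightarrow> ('n::finite \<Rightarrow> 'n \<Rightarrow> 'a::ring_1) \<Rightarrow> ('n \<Rightarrow> 'n \<Rightarrow> 'a) \<Rightarrow> ('n \<Rightarrow> 'n \<Rightarrow> 'a)" where
  "mat_bracket i j M N = (\<lambda>p q. mat_mult M N p q - (-1) ^ (i * j) * mat_mult N M p q)"

definition mat_map :: "('a \<Rightarrow> 'b) \<Rightarrow> ('n \<Rightarrow> 'n \<Rightarrow> 'a) \<Rightarrow> ('n \<Rightarrow> 'n \<Rightarrow> 'b)" where
  "mat_map f M = (\<lambda>p q. f (M p q))"

definition Fnil_obj :: "('k::field \<Rightarrow> 'a::ring_1) \<Rightarrow> (nat \<Rightarrow> 'a set) \<Rightarrow> ('a \<Rightarrow> 'a) \<Rightarrow>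
    (int \<Rightarrow> ('n::finite \<Rightarrow> 'k) set) \<Rightarrow> ('n \<Rightarrow> 'n \<Rightarrow> 'a) \<Rightarrow> bool" where
  "Fnil_obj \<iota> A d W \<omega> \<longleftrightarrow> \<omega> \<in> tensor \<iota> (A 1) (W_End W (-1)) \<and>
     (\<forall>p q. d (\<omega> p q) + \<iota> (1/2) * mat_bracket 1 1 \<omega> \<omega> p q = 0)"

definition Fnil_hom :: "('k::field \<Rightarrow> 'a::ring_1) \<Rightarrow> (nat \<Rightarrow> 'a set) \<Rightarrow> ('a \<Rightarrow> 'a) \<Rightarrow>
    (int \<Rightarrow> ('n::finite \<Rightarrow> 'k) set) \<Rightarrow> ('n \<Rightarrow> 'n \<Rightarrow> 'a) \<Rightarrow> ('n \<Rightarrow> 'n \<Rightarrow> 'a) \<Rightarrow> ('n \<Rightarrow> 'n \<Rightarrow> 'a) set" where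
  "Fnil_hom \<iota> A d W \<omega>1 \<omega>2 = {a. a \<in> tensor \<iota> (A 0) (W_End W 0) \<and>
     (\<forall>p q. d (a p q) + mat_mult \<omega>1 a p q - mat_mult a \<omega>2 p q = 0)}"

definition Fnil_gr_hom :: "('k::field \<Rightarrow> 'a::ring_1) \<Rightarrow> (nat \<Rightarrow> 'a set) \<Rightarrow> ('a \<Rightarrow> 'a) \<Rightarrow>
    (int \<Rightarrow> ('n::finite \<Rightarrow> 'k) set) \<Rightarrow> ('n \<Rightarrow> 'n \<Rightarrow> 'a) \<Rightarrow> ('n \<Rightarrow> 'n \<Rightarrow> 'a) \<Rightarrow> ('n \<Rightarrow> 'n \<Rightarrow> 'a) set" where
  "Fnil_gr_hom \<iota> A d W \<omega>1 \<omega>2 =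
     {a. (\<lambda>p q. a p q - (if p = q then 1 else 0)) \<in> tensor \<iota> (A 0) (W_End W (-1)) \<and>
     (\<forall>p q. d (a p q) + mat_mult \<omega>1 a p q - mat_mult a \<omega>2 p q = 0)}"

end

theory Submission
  imports Defs "HOL-Library.Function_Algebras"
begin

text \<open>Say a matrix over \<open>A\<close> has weight \<open>k\<close> if it lies in \<open>A \<otimes> W\<^sub>k(End V)\<close>. Morphisms
  \<open>\<omega>1 \<rightarrow> \<omega>2\<close> are the weight-0 solutions of \<open>da + \<omega>1 a - a \<omega>2 = 0\<close>, and since the \<open>\<omega>i\<close>
  have weight \<open>-1\<close> this equation can be analysed one weight at a time, using coordinates on a
  complement of \<open>W\<^sub>k\<^sub>-\<^sub>1\<close> in \<open>W\<^sub>k\<close>; the process stops because \<open>W\<^sub>k(End V) = 0\<close> for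
  sufficiently negative \<open>k\<close>.

  Injectivity: the leading coordinates of the difference of two morphisms with equal images are
  degree-0 cocycles killed by \<open>\<phi>\<close>, hence zero since \<open>H\<^sup>0(\<phi>)\<close> is injective.

  Surjectivity: given a morphism \<open>b\<close> downstairs, improve an approximate preimage \<open>a\<close> alternately
  in two ways. The leading coordinates of the error \<open>b - \<phi> a\<close> are closed of degree 0, hence
  constants, which lift. The leading coordinates of the defect \<open>da + \<omega>1 a - a \<omega>2\<close> are
  1-cocycles that \<open>\<phi>\<close> maps to coboundaries, hence coboundaries because \<open>H\<^sup>1(\<phi>)\<close> is injective,
  and subtracting their primitives lowers the weight of the defect.

  For the graded category the same weight-lowering step, applied to \<open>a - id\<close>, shows that a
  preimage of a unipotent morphism is unipotent.\<close>

lemma sum_fun_apply: "sum f A x = (\<Sum>a\<in>A. f a x)"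
  by (induction A rule: infinite_finite_induct) auto

subsection \<open>Square matrices over a field as a vector space\<close>

definition mat_scale :: "'k::field \<Rightarrow> ('n \<Rightarrow> 'n \<Rightarrow> 'k) \<Rightarrow> ('n \<Rightarrow> 'n \<Rightarrow> 'k)" where
  "mat_scale c M = (\<lambda>p q. c * M p q)"

lemma mat_scale_apply [simp]: "mat_scale c M p q = c * M p q"
  by (simp add: mat_scale_def)

interpretation mat_vs: vector_space "mat_scale :: 'k::field \<Rightarrow> ('n \<Rightarrow> 'n \<Rightarrow> 'k) \<Rightarrow> _"
  by standard (auto simp: fun_eq_iff algebra_simps)

definition mat_unit :: "'n \<Rightarrow> 'n \<Rightarrow> 'n \<Rightarrow> 'n \<Rightarrow> 'k::field" where
  "mat_unit p q = (\<lambda>i j. if i = p \<and> j = q then 1 else 0)"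

lemma mat_expand:
  fixes M :: "'n::finite \<Rightarrow> 'n \<Rightarrow> 'k::field"
  shows "M = (\<Sum>(p, q)\<in>UNIV. mat_scale (M p q) (mat_unit p q))"
proof (intro ext)
  fix i j
  have "(\<Sum>(p, q)\<in>UNIV. mat_scale (M p q) (mat_unit p q)) i j
      = (\<Sum>pq\<in>UNIV. if pq = (i, j) then M i j else 0)"
    unfolding sum_fun_apply by (rule sum.cong) (auto simp: mat_unit_def split: if_splits)
  then show "M i j = (\<Sum>(p, q)\<in>UNIV. mat_scale (M p q) (mat_unit p q)) i j"
    by simp
qed

lemma finite_dim_mat_vs:
  "\<exists>S. finite S \<and> (UNIV :: ('n::finite \<Rightarrow> 'n \<Rightarrow> 'k::field) set) \<subseteq> mat_vs.span S"
proof (intro exI conjI subsetI)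
  show "finite (range (\<lambda>(p, q). mat_unit p q :: 'n \<Rightarrow> 'n \<Rightarrow> 'k))"
    by simp
  fix M :: "'n \<Rightarrow> 'n \<Rightarrow> 'k"
  have "mat_scale (M p q) (mat_unit p q) \<in> mat_vs.span (range (\<lambda>(p, q). mat_unit p q))" for p q
    by (intro mat_vs.span_scale mat_vs.span_base) (auto intro: rev_image_eqI[of "(p, q)"])
  then show "M \<in> mat_vs.span (range (\<lambda>(p, q). mat_unit p q))"
    by (subst mat_expand) (auto intro: mat_vs.span_sum)
qed

definition mat_linear :: "(('n \<Rightarrow> 'n \<Rightarrow> 'k::field) \<Rightarrow> 'k) \<Rightarrow> bool" where
  "mat_linear L \<longleftrightarrow> (\<forall>E F. L (E + F) = L E + L F) \<and> (\<forall>c E. L (mat_scale c E) = c * L E)"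

lemma mat_linear_expand:
  fixes L :: "('n::finite \<Rightarrow> 'n \<Rightarrow> 'k::field) \<Rightarrow> 'k"
  assumes "mat_linear L"
  shows "L E = (\<Sum>(p, q)\<in>UNIV. E p q * L (mat_unit p q))"
proof -
  have add: "L (E + F) = L E + L F" and scale: "L (mat_scale c E) = c * L E" for E F c
    using assms by (auto simp: mat_linear_def)
  have "L 0 = 0"
    using add[of 0 0] by (simp only: add_0_left add_cancel_right_right)
  have "L E = L (\<Sum>(p, q)\<in>UNIV. mat_scale (E p q) (mat_unit p q))"
    by (subst mat_expand) (rule refl)
  also have "\<dots> = (\<Sum>(p, q)\<in>UNIV. E p q * L (mat_unit p q))"
    by (simp add: sum_comp_morphism[of L, OF \<open>L 0 = 0\<close> add, symmetric] scale case_prod_unfold comp_def)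
  finally show ?thesis .
qed

text \<open>\<open>U\<close> spans a complement of \<open>T'\<close> in \<open>T\<close>, and \<open>L u\<close> is the coordinate along \<open>u\<close>.\<close>

definition complement_coords ::
  "('n \<Rightarrow> 'n \<Rightarrow> 'k::field) set \<Rightarrow> ('n \<Rightarrow> 'n \<Rightarrow> 'k) set \<Rightarrow> ('n \<Rightarrow> 'n \<Rightarrow> 'k) set \<Rightarrow>
    (('n \<Rightarrow> 'n \<Rightarrow> 'k) \<Rightarrow> ('n \<Rightarrow> 'n \<Rightarrow> 'k) \<Rightarrow> 'k) \<Rightarrow> bool" where
  "complement_coords T' T U L \<longleftrightarrow> finite U \<and> U \<subseteq> T \<and> (\<forall>u. mat_linear (L u)) \<and>
     (\<forall>u\<in>U. \<forall>E\<in>T'. L u E = 0) \<and> (\<forall>E\<in>T. E - (\<Sum>u\<in>U. mat_scale (L u E) u) \<in> T')"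

lemma nested_bases:
  fixes T T' :: "('n::finite \<Rightarrow> 'n \<Rightarrow> 'k::field) set"
  assumes "T' \<subseteq> T"
  obtains B' B Bf where "B' \<subseteq> T'" "T' \<subseteq> mat_vs.span B'" "B' \<subseteq> B" "B \<subseteq> T"
    "T \<subseteq> mat_vs.span B" "B \<subseteq> Bf" "mat_vs.independent Bf" "UNIV \<subseteq> mat_vs.span Bf" "finite Bf"
proof -
  obtain B' where B': "{} \<subseteq> B'" "B' \<subseteq> T'" "mat_vs.independent B'" "T' \<subseteq> mat_vs.span B'"
    by (rule mat_vs.maximal_independent_subset_extend[OF empty_subsetI mat_vs.independent_empty])
  obtain B where B: "B' \<subseteq> B" "B \<subseteq> T" "mat_vs.independent B" "T \<subseteq> mat_vs.span B"
    by (rule mat_vs.maximal_independent_subset_extend[OF order_trans[OF B'(2) assms] B'(3)])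
  obtain Bf where Bf: "B \<subseteq> Bf" "Bf \<subseteq> UNIV" "mat_vs.independent Bf" "UNIV \<subseteq> mat_vs.span Bf"
    by (rule mat_vs.maximal_independent_subset_extend[OF subset_UNIV B(3)])
  obtain S :: "('n \<Rightarrow> 'n \<Rightarrow> 'k) set" where S: "finite S" "UNIV \<subseteq> mat_vs.span S"
    using finite_dim_mat_vs by blast
  have "finite Bf"
    using mat_vs.independent_span_bound[OF S(1) Bf(3) order_trans[OF Bf(2) S(2)]] ..
  then show ?thesis
    by (rule that[OF B'(2,4) B(1,2,4) Bf(1,3,4)])
qed

lemma complement_coords_exist:
  fixes T T' :: "('n::finite \<Rightarrow> 'n \<Rightarrow> 'k::field) set"
  assumes sub: "mat_vs.subspace T'" and "T' \<subseteq> T"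
  shows "\<exists>U L. complement_coords T' T U L"
proof -
  obtain B' B Bf where B': "B' \<subseteq> T'" "T' \<subseteq> mat_vs.span B'"
    and B: "B' \<subseteq> B" "B \<subseteq> T" "T \<subseteq> mat_vs.span B"
    and Bf: "B \<subseteq> Bf" "mat_vs.independent Bf" "UNIV \<subseteq> mat_vs.span Bf" "finite Bf"
    using nested_bases[OF \<open>T' \<subseteq> T\<close>] .
  define L where "L u E = mat_vs.representation Bf E u" for u E
  have span_Bf: "E \<in> mat_vs.span Bf" for E
    using Bf(3) by blast
  have "finite B"
    using finite_subset[OF Bf(1,4)] .
  have L_restrict: "L u E = mat_vs.representation C E u" if "C \<subseteq> Bf" "E \<in> mat_vs.span C" for C u E
    unfolding L_def using mat_vs.representation_extend[OF Bf(2) that(2,1)] by simp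
  have "mat_linear (L u)" for u
    unfolding mat_linear_def L_def
    by (simp add: mat_vs.representation_add[OF Bf(2) span_Bf span_Bf]
        mat_vs.representation_scale[OF Bf(2) span_Bf])
  moreover have "L u E = 0" if "u \<in> B - B'" "E \<in> T'" for u E
  proof -
    have "E \<in> mat_vs.span B'"
      using B'(2) that(2) by blast
    then have "L u E = mat_vs.representation B' E u"
      by (rule L_restrict[OF order_trans[OF B(1) Bf(1)]])
    then show ?thesis
      using mat_vs.representation_ne_zero[of B' E u] that(1) by auto
  qed
  moreover have "E - (\<Sum>u\<in>B - B'. mat_scale (L u E) u) \<in> T'" if "E \<in> T" for E
  proof -
    have "E \<in> mat_vs.span B"
      using B(3) that by blast
    then have repr: "L u E = mat_vs.representation B E u" for u
      by (rule L_restrict[OF Bf(1)])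
    have "mat_vs.independent B"
      using mat_vs.independent_mono[OF Bf(2,1)] .
    then have "E = (\<Sum>u\<in>B. mat_scale (L u E) u)"
      unfolding repr
      by (rule mat_vs.sum_representation_eq[symmetric, OF _ \<open>E \<in> mat_vs.span B\<close> \<open>finite B\<close> order_refl])
    also have "\<dots> = (\<Sum>u\<in>B - B'. mat_scale (L u E) u) + (\<Sum>u\<in>B'. mat_scale (L u E) u)"
      by (rule sum.subset_diff[OF B(1) \<open>finite B\<close>])
    finally have "E - (\<Sum>u\<in>B - B'. mat_scale (L u E) u) = (\<Sum>u\<in>B'. mat_scale (L u E) u)"
      by (simp add: algebra_simps)
    also have "\<dots> \<in> T'"
      using B'(1) by (intro mat_vs.subspace_sum[OF sub] mat_vs.subspace_scale[OF sub]) auto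
    finally show ?thesis .
  qed
  ultimately have "complement_coords T' T (B - B') L"
    using \<open>finite B\<close> B(2) by (auto simp: complement_coords_def)
  then show ?thesis by blast
qed

definition mat_id :: "'n \<Rightarrow> 'n \<Rightarrow> 'a::zero_neq_one" where
  "mat_id = (\<lambda>p q. if p = q then 1 else 0)"

lemma mat_mult_add_left: "mat_mult (M + N) P = mat_mult M P + mat_mult N P"
  by (simp add: mat_mult_def fun_eq_iff distrib_right sum.distrib)

lemma mat_mult_add_right: "mat_mult P (M + N) = mat_mult P M + mat_mult P N"
  by (simp add: mat_mult_def fun_eq_iff distrib_left sum.distrib)

lemma mat_mult_zero_left [simp]: "mat_mult 0 P = 0"
  by (simp add: mat_mult_def fun_eq_iff)

lemma mat_mult_zero_right [simp]: "mat_mult P 0 = 0"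
  by (simp add: mat_mult_def fun_eq_iff)

lemma mat_mult_neg_left: "mat_mult (- M) P = - mat_mult M P"
  by (simp add: mat_mult_def fun_eq_iff sum_negf)

lemma mat_mult_neg_right: "mat_mult P (- M) = - mat_mult P M"
  by (simp add: mat_mult_def fun_eq_iff sum_negf)

lemma mat_mult_diff_left: "mat_mult (M - N) P = mat_mult M P - mat_mult N P"
  by (simp add: mat_mult_def fun_eq_iff left_diff_distrib sum_subtractf)

lemma mat_mult_diff_right: "mat_mult P (M - N) = mat_mult P M - mat_mult P N"
  by (simp add: mat_mult_def fun_eq_iff right_diff_distrib sum_subtractf)

lemma mat_mult_assoc: "mat_mult (mat_mult M N) P = mat_mult M (mat_mult N P)"
  unfolding mat_mult_def fun_eq_iff
  by (simp only: sum_distrib_left sum_distrib_right mult.assoc) (intro allI sum.swap)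

lemmas mat_mult_distribs = mat_mult_add_left mat_mult_add_right mat_mult_neg_left
  mat_mult_neg_right mat_mult_diff_left mat_mult_diff_right

subsection \<open>The induced filtration on \<open>End V\<close>\<close>

lemma W_mono:
  assumes "incr_filtration W" and "i \<le> j"
  shows "W i \<subseteq> W j"
proof (rule int_ge_induct[OF assms(2), where P="\<lambda>j. W i \<subseteq> W j"])
  fix k assume "W i \<subseteq> W k"
  moreover have "W k \<subseteq> W (k + 1)"
    using assms(1) unfolding incr_filtration_def by blast
  ultimately show "W i \<subseteq> W (k + 1)"
    by (rule order_trans)
qed (rule order_refl)

lemma W_End_mono:
  assumes "incr_filtration W" and "k \<le> l"
  shows "W_End W k \<subseteq> W_End W l"
proof
  fix E assume "E \<in> W_End W k"
  moreover have "W (i + k) \<subseteq> W (i + l)" for i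
    using assms by (intro W_mono) simp_all
  ultimately show "E \<in> W_End W l"
    unfolding W_End_def by blast
qed

lemma endo_apply_mat_mult: "endo_apply (mat_mult E F) v = endo_apply E (endo_apply F v)"
  unfolding endo_apply_def mat_mult_def fun_eq_iff
  by (simp only: sum_distrib_left sum_distrib_right mult.assoc) (intro allI sum.swap)

lemma W_End_mult:
  assumes "E \<in> W_End W k" and "F \<in> W_End W l"
  shows "mat_mult E F \<in> W_End W (k + l)"
  unfolding W_End_def
proof (intro CollectI allI ballI)
  fix i v assume "v \<in> W i"
  then have "endo_apply F v \<in> W (i + l)"
    using assms(2) unfolding W_End_def by blast
  then have "endo_apply E (endo_apply F v) \<in> W (i + l + k)"
    using assms(1) unfolding W_End_def by blast
  then show "endo_apply (mat_mult E F) v \<in> W (i + (k + l))"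
    by (simp add: endo_apply_mat_mult add_ac)
qed

lemma W_End_subspace:
  assumes "incr_filtration W"
  shows "mat_vs.subspace (W_End W k)"
  unfolding mat_vs.subspace_def W_End_def
proof (intro conjI ballI allI CollectI)
  have sub: "is_subspace (W j)" for j
    using assms unfolding incr_filtration_def by blast
  fix i v assume "v \<in> W i"
  have "endo_apply 0 v = (\<lambda>_. 0)"
    by (simp add: endo_apply_def)
  then show "endo_apply 0 v \<in> W (i + k)"
    using sub unfolding is_subspace_def by simp
next
  have sub: "is_subspace (W j)" for j
    using assms unfolding incr_filtration_def by blast
  fix E G i v assume "E \<in> {E. \<forall>i. \<forall>v\<in>W i. endo_apply E v \<in> W (i + k)}"
    "G \<in> {E. \<forall>i. \<forall>v\<in>W i. endo_apply E v \<in> W (i + k)}" "v \<in> W i"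
  moreover have "endo_apply (E + G) v = (\<lambda>p. endo_apply E v p + endo_apply G v p)"
    by (simp add: endo_apply_def distrib_right sum.distrib)
  ultimately show "endo_apply (E + G) v \<in> W (i + k)"
    using sub[of "i + k"] unfolding is_subspace_def by simp
next
  have sub: "is_subspace (W j)" for j
    using assms unfolding incr_filtration_def by blast
  fix c E i v assume "E \<in> {E. \<forall>i. \<forall>v\<in>W i. endo_apply E v \<in> W (i + k)}" "v \<in> W i"
  moreover have "endo_apply (mat_scale c E) v = (\<lambda>p. c * endo_apply E v p)"
    by (simp add: endo_apply_def sum_distrib_left mult.assoc)
  ultimately show "endo_apply (mat_scale c E) v \<in> W (i + k)"
    using sub[of "i + k"] unfolding is_subspace_def by simp
qed

lemma endo_apply_unit: "endo_apply E (\<lambda>r. if r = q then 1 else 0) p = (E p q :: 'k::field)"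
proof -
  have "endo_apply E (\<lambda>r. if r = q then 1 else 0) p = (\<Sum>r\<in>UNIV. if r = q then E p r else 0)"
    unfolding endo_apply_def by (rule sum.cong) auto
  then show ?thesis
    by simp
qed

lemma mat_id_W_End:
  fixes W :: "int \<Rightarrow> ('n::finite \<Rightarrow> 'k::field) set"
  shows "mat_id \<in> W_End W 0"
proof -
  have "endo_apply mat_id v = (v :: 'n::finite \<Rightarrow> 'k::field)" for v
  proof
    fix p
    have "endo_apply mat_id v p = (\<Sum>q\<in>UNIV. if p = q then v q else 0)"
      unfolding endo_apply_def mat_id_def by (rule sum.cong) auto
    then show "endo_apply mat_id v p = v p"
      by simp
  qed
  then show ?thesis
    unfolding W_End_def by simp
qed

lemma W_End_eventually_zero:
  assumes "incr_filtration W"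
  obtains N :: nat where "\<And>k. k \<le> - int N \<Longrightarrow> W_End W k \<subseteq> {0}"
proof -
  obtain a b where Wa: "W a = {\<lambda>_. 0}" and Wb: "W b = UNIV"
    using assms unfolding incr_filtration_def by blast
  have "W_End W k \<subseteq> {0}" if k: "k \<le> - int (nat (b - a))" for k
  proof
    fix E assume E: "E \<in> W_End W k"
    have "E p q = 0" for p q
    proof -
      have "endo_apply E (\<lambda>r. if r = q then 1 else 0) \<in> W (b + k)"
        using E Wb unfolding W_End_def by blast
      also have "W (b + k) \<subseteq> W a"
        using k by (intro W_mono[OF assms]) (cases "a \<le> b"; simp)
      finally show ?thesis
        using Wa endo_apply_unit[of E q p] by (auto simp: fun_eq_iff)
    qed
    then show "E \<in> {0}"
      by (simp add: fun_eq_iff)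
  qed
  then show ?thesis
    by (rule that)
qed

lemma W_End_complement_coords:
  assumes "incr_filtration W" and "k' \<le> k"
  obtains U L where "complement_coords (W_End W k') (W_End W k) U L"
  using complement_coords_exist[OF W_End_subspace[OF assms(1)] W_End_mono[OF assms]] by blast

subsection \<open>Tensors \<open>S \<otimes> T\<close> along a central embedding of the scalars\<close>

definition iota_closed :: "('k::field \<Rightarrow> 'a::ring_1) \<Rightarrow> 'a set \<Rightarrow> bool" where
  "iota_closed \<iota> S \<longleftrightarrow> 0 \<in> S \<and> (\<forall>x\<in>S. \<forall>y\<in>S. x + y \<in> S) \<and> (\<forall>c. \<forall>x\<in>S. \<iota> c * x \<in> S)"

definition elem_tensor :: "('k \<Rightarrow> 'a::ring_1) \<Rightarrow> 'a \<Rightarrow> ('n \<Rightarrow> 'n \<Rightarrow> 'k) \<Rightarrow> ('n \<Rightarrow> 'n \<Rightarrow> 'a)" where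
  "elem_tensor \<iota> x E = (\<lambda>p q. x * \<iota> (E p q))"

text \<open>\<open>contract \<iota> L\<close> is \<open>id \<otimes> L : A \<otimes> End V \<rightarrow> A\<close>.\<close>

definition contract ::
  "('k::field \<Rightarrow> 'a::ring_1) \<Rightarrow> (('n::finite \<Rightarrow> 'n \<Rightarrow> 'k) \<Rightarrow> 'k) \<Rightarrow> ('n \<Rightarrow> 'n \<Rightarrow> 'a) \<Rightarrow> 'a" where
  "contract \<iota> L M = (\<Sum>(p, q)\<in>UNIV. \<iota> (L (mat_unit p q)) * M p q)"

lemma elem_tensor_apply [simp]: "elem_tensor \<iota> x E p q = x * \<iota> (E p q)"
  by (simp add: elem_tensor_def)

lemma elem_tensor_add_left: "elem_tensor \<iota> (x + y) E = elem_tensor \<iota> x E + elem_tensor \<iota> y E"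
  by (simp add: fun_eq_iff algebra_simps)

lemma elem_tensor_zero_left [simp]: "elem_tensor \<iota> 0 E = 0"
  by (simp add: fun_eq_iff)

lemma contract_add: "contract \<iota> L (M + N) = contract \<iota> L M + contract \<iota> L N"
  by (simp add: contract_def distrib_left sum.distrib case_prod_unfold)

lemma contract_zero [simp]: "contract \<iota> L 0 = 0"
  by (simp add: contract_def)

lemma contract_neg: "contract \<iota> L (- M) = - contract \<iota> L M"
  by (simp add: contract_def sum_negf case_prod_unfold)

lemma contract_diff: "contract \<iota> L (M - N) = contract \<iota> L M - contract \<iota> L N"
  by (simp add: contract_def right_diff_distrib sum_subtractf case_prod_unfold)

locale central_embedding =
  fixes \<iota> :: "'k::field \<Rightarrow> 'a::ring_1"
  assumes iota_add: "\<iota> (x + y) = \<iota> x + \<iota> y"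
    and iota_mult: "\<iota> (x * y) = \<iota> x * \<iota> y"
    and iota_one: "\<iota> 1 = 1"
    and iota_central: "\<iota> c * z = z * \<iota> c"
begin

lemma iota_zero [simp]: "\<iota> 0 = 0"
  using iota_add[of 0 0] by simp

lemma iota_minus: "\<iota> (- x) = - \<iota> x"
proof -
  have "\<iota> x + \<iota> (- x) = 0" using iota_add[of x "- x"] by simp
  then show ?thesis by (rule minus_unique[symmetric])
qed

lemma iota_diff: "\<iota> (x - y) = \<iota> x - \<iota> y"
  by (metis diff_conv_add_uminus iota_add iota_minus)

lemma iota_sum: "\<iota> (sum f A) = (\<Sum>a\<in>A. \<iota> (f a))"
  by (induction A rule: infinite_finite_induct) (auto simp: iota_add)

lemma elem_tensor_diff_right: "elem_tensor \<iota> x (E - F) = elem_tensor \<iota> x E - elem_tensor \<iota> x F"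
  by (simp add: fun_eq_iff iota_diff algebra_simps)

lemma elem_tensor_zero_right [simp]: "elem_tensor \<iota> x 0 = 0"
  by (simp add: fun_eq_iff)

lemma elem_tensor_sum_scale:
  "elem_tensor \<iota> x (\<Sum>u\<in>U. mat_scale (c u) u) = (\<Sum>u\<in>U. elem_tensor \<iota> (x * \<iota> (c u)) u)"
  by (simp add: fun_eq_iff sum_fun_apply iota_sum iota_mult sum_distrib_left mult.assoc)

lemma tensor_induct [consumes 1, case_names zero elem_add]:
  assumes "M \<in> tensor \<iota> S T" "P 0"
    "\<And>x E M. x \<in> S \<Longrightarrow> E \<in> T \<Longrightarrow> P M \<Longrightarrow> P (elem_tensor \<iota> x E + M)"
  shows "P M"
proof -
  obtain xs where xs: "\<forall>(a, E)\<in>set xs. a \<in> S \<and> E \<in> T"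
    "M = (\<lambda>p q. sum_list (map (\<lambda>(a, E). a * \<iota> (E p q)) xs))"
    using assms(1) unfolding tensor_def by blast
  from xs(1) have "P (\<lambda>p q. sum_list (map (\<lambda>(a, E). a * \<iota> (E p q)) xs))"
  proof (induction xs)
    case Nil
    then show ?case using assms(2) by (simp add: zero_fun_def)
  next
    case (Cons y ys)
    obtain a E where y: "y = (a, E)" by (cases y)
    have "(\<lambda>p q. sum_list (map (\<lambda>(a, E). a * \<iota> (E p q)) (y # ys))) =
        elem_tensor \<iota> a E + (\<lambda>p q. sum_list (map (\<lambda>(a, E). a * \<iota> (E p q)) ys))"
      by (simp add: y fun_eq_iff)
    then show ?case using Cons assms(3)[of a E] y by auto
  qed
  then show ?thesis using xs(2) by simp
qed

lemma tensor_zero [simp]: "0 \<in> tensor \<iota> S T"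
  unfolding tensor_def by (rule CollectI, rule exI[of _ "[]"]) (auto simp: fun_eq_iff)

lemma tensor_elem: "x \<in> S \<Longrightarrow> E \<in> T \<Longrightarrow> elem_tensor \<iota> x E \<in> tensor \<iota> S T"
  unfolding tensor_def by (rule CollectI, rule exI[of _ "[(x, E)]"]) (auto simp: fun_eq_iff)

lemma tensor_add: "M \<in> tensor \<iota> S T \<Longrightarrow> N \<in> tensor \<iota> S T \<Longrightarrow> M + N \<in> tensor \<iota> S T"
proof -
  assume "M \<in> tensor \<iota> S T" "N \<in> tensor \<iota> S T"
  then obtain xs ys where xs: "\<forall>(a, E)\<in>set xs. a \<in> S \<and> E \<in> T"
    "M = (\<lambda>p q. sum_list (map (\<lambda>(a, E). a * \<iota> (E p q)) xs))"
    and ys: "\<forall>(a, E)\<in>set ys. a \<in> S \<and> E \<in> T"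
    "N = (\<lambda>p q. sum_list (map (\<lambda>(a, E). a * \<iota> (E p q)) ys))"
    unfolding tensor_def by blast
  show ?thesis unfolding tensor_def
    by (rule CollectI, rule exI[of _ "xs @ ys"]) (use xs ys in \<open>auto simp: fun_eq_iff\<close>)
qed

lemma tensor_mono: "M \<in> tensor \<iota> S T \<Longrightarrow> S \<subseteq> S' \<Longrightarrow> T \<subseteq> T' \<Longrightarrow> M \<in> tensor \<iota> S' T'"
  by (induction M rule: tensor_induct) (auto intro: tensor_add tensor_elem)

lemma tensor_sum: "(\<And>i. i \<in> I \<Longrightarrow> f i \<in> tensor \<iota> S T) \<Longrightarrow> sum f I \<in> tensor \<iota> S T"
  by (induction I rule: infinite_finite_induct) (auto intro: tensor_add)

lemma tensor_neg:
  assumes "M \<in> tensor \<iota> S T" and "\<And>x. x \<in> S \<Longrightarrow> - x \<in> S"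
  shows "- M \<in> tensor \<iota> S T"
  using assms(1)
proof (induction M rule: tensor_induct)
  case zero
  show ?case by (simp only: minus_zero tensor_zero)
next
  case (elem_add x E M)
  have "- (elem_tensor \<iota> x E + M) = elem_tensor \<iota> (- x) E + - M"
    by (simp add: fun_eq_iff)
  also have "\<dots> \<in> tensor \<iota> S T"
    using elem_add assms(2) by (intro tensor_add tensor_elem)
  finally show ?case .
qed

lemma tensor_diff:
  "(\<And>x. x \<in> S \<Longrightarrow> - x \<in> S) \<Longrightarrow> M \<in> tensor \<iota> S T \<Longrightarrow> N \<in> tensor \<iota> S T \<Longrightarrow>
    M - N \<in> tensor \<iota> S T"
  using tensor_add[of M S T "- N"] tensor_neg[of N S T] by (metis diff_conv_add_uminus)

lemma tensor_eq_zero: "M \<in> tensor \<iota> S T \<Longrightarrow> T \<subseteq> {0} \<Longrightarrow> M = 0"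
  by (induction M rule: tensor_induct) auto

lemma tensor_entry:
  assumes "M \<in> tensor \<iota> S T" and S: "iota_closed \<iota> S"
  shows "M p q \<in> S"
  using assms(1)
proof (induction M rule: tensor_induct)
  case zero
  show ?case using S by (simp add: iota_closed_def)
next
  case (elem_add x E M)
  have "x * \<iota> (E p q) \<in> S"
    using S elem_add(1) by (simp add: iota_closed_def iota_central[symmetric])
  then show ?case
    using S elem_add(3) by (simp add: iota_closed_def)
qed

lemma mat_mult_elem_tensor:
  "mat_mult (elem_tensor \<iota> x E) (elem_tensor \<iota> y F) = elem_tensor \<iota> (x * y) (mat_mult E F)"
proof -
  have *: "(x * \<iota> a) * (y * \<iota> b) = x * y * (\<iota> a * \<iota> b)" for a b
    by (metis iota_central mult.assoc)
  show ?thesis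
    by (simp add: fun_eq_iff mat_mult_def * iota_sum iota_mult sum_distrib_left)
qed

lemma tensor_mult:
  assumes M: "M \<in> tensor \<iota> S1 T1" and N: "N \<in> tensor \<iota> S2 T2"
    and S: "\<And>x y. x \<in> S1 \<Longrightarrow> y \<in> S2 \<Longrightarrow> x * y \<in> S3"
    and T: "\<And>E F. E \<in> T1 \<Longrightarrow> F \<in> T2 \<Longrightarrow> mat_mult E F \<in> T3"
  shows "mat_mult M N \<in> tensor \<iota> S3 T3"
  using M
proof (induction M rule: tensor_induct)
  case zero
  show ?case by (simp only: mat_mult_zero_left tensor_zero)
next
  case (elem_add x E M)
  from N have "mat_mult (elem_tensor \<iota> x E) N \<in> tensor \<iota> S3 T3"
  proof (induction N rule: tensor_induct)
    case zero
    show ?case by (simp only: mat_mult_zero_right tensor_zero)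
  next
    case (elem_add y F N)
    have "elem_tensor \<iota> (x * y) (mat_mult E F) \<in> tensor \<iota> S3 T3"
      using S T elem_add(1,2) \<open>x \<in> S1\<close> \<open>E \<in> T1\<close> by (intro tensor_elem)
    then show ?case
      unfolding mat_mult_add_right mat_mult_elem_tensor using elem_add(3) by (rule tensor_add)
  qed
  then show ?case
    unfolding mat_mult_add_left using elem_add(3) by (rule tensor_add)
qed

lemma contract_elem_tensor:
  assumes "mat_linear L"
  shows "contract \<iota> L (elem_tensor \<iota> x E) = x * \<iota> (L E)"
proof -
  have "\<iota> a * (x * \<iota> b) = x * \<iota> (b * a)" for a b
    by (simp add: iota_mult mult.assoc[symmetric] iota_central[of a x] mult.commute[of b])
  then have "contract \<iota> L (elem_tensor \<iota> x E)
      = (\<Sum>(p, q)\<in>UNIV. x * \<iota> (E p q * L (mat_unit p q)))"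
    by (simp add: contract_def)
  also have "\<dots> = x * \<iota> (L E)"
    by (simp add: mat_linear_expand[OF assms, of E] iota_sum sum_distrib_left case_prod_unfold)
  finally show ?thesis .
qed

lemma contract_mem:
  assumes "M \<in> tensor \<iota> S T" and S: "iota_closed \<iota> S" and L: "mat_linear L"
  shows "contract \<iota> L M \<in> S"
  using assms(1)
proof (induction M rule: tensor_induct)
  case zero
  show ?case using S by (simp only: contract_zero iota_closed_def)
next
  case (elem_add x E M)
  have "x * \<iota> (L E) \<in> S"
    using S elem_add(1) by (simp add: iota_closed_def iota_central[symmetric])
  then show ?case
    using S elem_add(3) unfolding contract_add contract_elem_tensor[OF L] iota_closed_def by blast
qed

lemma contract_vanish:
  assumes "M \<in> tensor \<iota> S T" and L: "mat_linear L" and "\<And>E. E \<in> T \<Longrightarrow> L E = 0"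
  shows "contract \<iota> L M = 0"
  using assms(1)
proof (induction M rule: tensor_induct)
  case (elem_add x E M)
  then show ?case
    by (simp only: contract_add contract_elem_tensor[OF L] assms(3) iota_zero mult_zero_right add_0)
qed (rule contract_zero)

lemma contract_coords_vanish:
  assumes "complement_coords T' T U L" "u \<in> U" "M \<in> tensor \<iota> S T'"
  shows "contract \<iota> (L u) M = 0"
  using assms by (intro contract_vanish[OF assms(3)]) (auto simp: complement_coords_def)

lemma tensor_sub_contract_coords:
  assumes cc: "complement_coords T' T U L" and "M \<in> tensor \<iota> S T"
  shows "M - (\<Sum>u\<in>U. elem_tensor \<iota> (contract \<iota> (L u) M) u) \<in> tensor \<iota> S T'"
  using assms(2)
proof (induction M rule: tensor_induct)
  case zero
  show ?case
    by (simp only: contract_zero elem_tensor_zero_left sum.neutral_const diff_zero tensor_zero)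
next
  case (elem_add x E N)
  have L: "mat_linear (L u)" and dec: "E - (\<Sum>u\<in>U. mat_scale (L u E) u) \<in> T'" for u
    using cc elem_add(2) by (auto simp: complement_coords_def)
  let ?R = "\<lambda>N. \<Sum>u\<in>U. elem_tensor \<iota> (contract \<iota> (L u) N) u"
  have "?R (elem_tensor \<iota> x E + N) = (\<Sum>u\<in>U. elem_tensor \<iota> (x * \<iota> (L u E)) u) + ?R N"
    by (simp only: contract_add contract_elem_tensor[OF L] elem_tensor_add_left sum.distrib)
  then have "elem_tensor \<iota> x E + N - ?R (elem_tensor \<iota> x E + N)
      = elem_tensor \<iota> x (E - (\<Sum>u\<in>U. mat_scale (L u E) u)) + (N - ?R N)"
    by (simp only: elem_tensor_diff_right elem_tensor_sum_scale add_diff_add)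
  also have "\<dots> \<in> tensor \<iota> S T'"
    using elem_add(1,3) dec by (intro tensor_add tensor_elem)
  finally show ?case .
qed

lemma tensor_lower_if_contract_zero:
  assumes "complement_coords T' T U L" "M \<in> tensor \<iota> S T"
    and "\<And>u. u \<in> U \<Longrightarrow> contract \<iota> (L u) M = 0"
  shows "M \<in> tensor \<iota> S T'"
  using tensor_sub_contract_coords[OF assms(1,2)] by (simp add: assms(3))

lemma tensor_UNIV: "M \<in> tensor \<iota> S T \<Longrightarrow> M \<in> tensor \<iota> UNIV T"
  by (erule tensor_mono) auto

lemma tensor_W_End_mono:
  "incr_filtration W \<Longrightarrow> M \<in> tensor \<iota> S (W_End W k) \<Longrightarrow> k \<le> l \<Longrightarrow> M \<in> tensor \<iota> S (W_End W l)"
  by (erule tensor_mono) (auto dest: W_End_mono)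

end

locale scalar_linear = i1: central_embedding \<iota>1 + i2: central_embedding \<iota>2
  for \<iota>1 :: "'k::field \<Rightarrow> 'a::ring_1" and \<iota>2 :: "'k \<Rightarrow> 'b::ring_1" +
  fixes f :: "'a \<Rightarrow> 'b"
  assumes f_add: "f (x + y) = f x + f y"
    and f_scale: "f (\<iota>1 c * x) = \<iota>2 c * f x"
begin

lemma f_zero [simp]: "f 0 = 0"
  using f_add[of 0 0] by simp

lemma f_minus: "f (- x) = - f x"
proof -
  have "f x + f (- x) = 0" using f_add[of x "- x"] by simp
  then show ?thesis by (rule minus_unique[symmetric])
qed

lemma f_diff: "f (x - y) = f x - f y"
  by (metis diff_conv_add_uminus f_add f_minus)

lemma f_sum: "f (sum g A) = (\<Sum>a\<in>A. f (g a))"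
  by (induction A rule: infinite_finite_induct) (auto simp: f_add)

lemma f_scale_right: "f (x * \<iota>1 c) = f x * \<iota>2 c"
  by (metis f_scale i1.iota_central i2.iota_central)

lemma mat_map_elem_tensor: "mat_map f (elem_tensor \<iota>1 x E) = elem_tensor \<iota>2 (f x) E"
  by (simp add: fun_eq_iff mat_map_def f_scale_right)

lemma mat_map_add: "mat_map f (M + N) = mat_map f M + mat_map f N"
  by (simp add: fun_eq_iff mat_map_def f_add)

lemma mat_map_zero [simp]: "mat_map f 0 = 0"
  by (simp add: fun_eq_iff mat_map_def)

lemma mat_map_diff: "mat_map f (M - N) = mat_map f M - mat_map f N"
  by (simp add: fun_eq_iff mat_map_def f_diff)

lemma mat_map_sum: "mat_map f (sum g I) = (\<Sum>i\<in>I. mat_map f (g i))"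
  by (simp add: fun_eq_iff mat_map_def sum_fun_apply f_sum)

lemma tensor_mat_map:
  assumes "M \<in> tensor \<iota>1 S T" and "\<And>x. x \<in> S \<Longrightarrow> f x \<in> S'"
  shows "mat_map f M \<in> tensor \<iota>2 S' T"
  using assms(1)
proof (induction M rule: i1.tensor_induct)
  case zero
  show ?case by (simp only: mat_map_zero i2.tensor_zero)
next
  case (elem_add x E N)
  then show ?case
    unfolding mat_map_add mat_map_elem_tensor using assms(2) by (intro i2.tensor_add i2.tensor_elem)
qed

lemma f_contract: "f (contract \<iota>1 L M) = contract \<iota>2 L (mat_map f M)"
  by (simp add: contract_def f_sum f_scale mat_map_def case_prod_unfold)

end

locale scalar_ring_hom = scalar_linear +
  assumes f_mult: "f (x * y) = f x * f y"
begin

lemma mat_map_mult: "mat_map f (mat_mult M N) = mat_mult (mat_map f M) (mat_map f N)"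
  by (simp add: fun_eq_iff mat_map_def mat_mult_def f_sum f_mult)

end

subsection \<open>Differential graded algebras\<close>

definition twisted_diff ::
  "('a \<Rightarrow> 'a) \<Rightarrow> ('n::finite \<Rightarrow> 'n \<Rightarrow> 'a::ring_1) \<Rightarrow> ('n \<Rightarrow> 'n \<Rightarrow> 'a) \<Rightarrow> ('n \<Rightarrow> 'n \<Rightarrow> 'a) \<Rightarrow>
    ('n \<Rightarrow> 'n \<Rightarrow> 'a)" where
  "twisted_diff d \<omega>1 \<omega>2 a = mat_map d a + mat_mult \<omega>1 a - mat_mult a \<omega>2"

lemma Fnil_hom_iff:
  "a \<in> Fnil_hom \<iota> A d W \<omega>1 \<omega>2 \<longleftrightarrow>
     a \<in> tensor \<iota> (A 0) (W_End W 0) \<and> twisted_diff d \<omega>1 \<omega>2 a = 0"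
  by (auto simp: Fnil_hom_def twisted_diff_def fun_eq_iff mat_map_def)

lemma Fnil_gr_hom_iff:
  "a \<in> Fnil_gr_hom \<iota> A d W \<omega>1 \<omega>2 \<longleftrightarrow>
     a - mat_id \<in> tensor \<iota> (A 0) (W_End W (-1)) \<and> twisted_diff d \<omega>1 \<omega>2 a = 0"
proof -
  have "(\<lambda>p q. a p q - (if p = q then 1 else 0)) = a - mat_id"
    by (simp add: fun_eq_iff mat_id_def)
  moreover have "(\<forall>p q. d (a p q) + mat_mult \<omega>1 a p q - mat_mult a \<omega>2 p q = 0) \<longleftrightarrow>
      twisted_diff d \<omega>1 \<omega>2 a = 0"
    by (simp add: twisted_diff_def fun_eq_iff mat_map_def)
  ultimately show ?thesis
    unfolding Fnil_gr_hom_def by simp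
qed

locale dga_alg = central_embedding \<iota> for \<iota> :: "'k::field \<Rightarrow> 'a::ring_1" +
  fixes A :: "nat \<Rightarrow> 'a set" and d :: "'a \<Rightarrow> 'a"
  assumes A_zero: "0 \<in> A i"
    and A_add: "x \<in> A i \<Longrightarrow> y \<in> A i \<Longrightarrow> x + y \<in> A i"
    and A_scale: "x \<in> A i \<Longrightarrow> \<iota> c * x \<in> A i"
    and A_mult: "x \<in> A i \<Longrightarrow> y \<in> A j \<Longrightarrow> x * y \<in> A (i + j)"
    and one_A: "1 \<in> A 0"
    and d_add: "d (x + y) = d x + d y"
    and d_scale: "d (\<iota> c * x) = \<iota> c * d x"
    and d_d: "d (d x) = 0"
    and d_mult: "x \<in> A i \<Longrightarrow> d (x * y) = d x * y + (-1) ^ i * x * d y"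

lemma dga_alg_if_dga: "dga \<iota> A d \<Longrightarrow> dga_alg \<iota> A d"
  unfolding dga_def by (elim conjE) (unfold_locales; metis)

context dga_alg
begin

sublocale d: scalar_linear \<iota> \<iota> d
  by unfold_locales (rule d_add d_scale)+

lemma A_neg: "x \<in> A i \<Longrightarrow> - x \<in> A i"
  using A_scale[of x i "-1"] by (simp add: iota_minus iota_one)

lemma iota_closed_A: "iota_closed \<iota> (A i)"
  by (auto simp: iota_closed_def A_zero A_add A_scale)

lemma iota_in_A0: "\<iota> c \<in> A 0"
  using A_scale[OF one_A, of c] by simp

lemma d_one: "d 1 = 0"
  using d_mult[OF one_A, of 1] by simp

lemma d_iota: "d (\<iota> c) = 0"
  using d_scale[of c 1] by (simp add: d_one)

lemma closed_A0_eq_iota: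
  assumes "cohom_connected \<iota> A d" and "x \<in> A 0" "d x = 0"
  obtains c where "x = \<iota> c"
proof -
  obtain f where f: "bij_betw f (UNIV :: 'k set) (cocycles A d 0)" "\<And>c x. f (c * x) = \<iota> c * f x"
    using assms(1) unfolding cohom_connected_def by blast
  have fc: "f c = \<iota> c * f 1" for c
    using f(2)[of c 1] by simp
  have "1 \<in> cocycles A d 0" "x \<in> cocycles A d 0"
    using assms(2,3) by (simp_all add: cocycles_def one_A d_one)
  then obtain c0 c1 where c0: "1 = f c0" and c1: "x = f c1"
    using f(1) unfolding bij_betw_def by blast
  then have "c0 \<noteq> 0"
    using fc[of c0] by auto
  then have "f 1 = \<iota> (1 / c0) * (\<iota> c0 * f 1)"
    by (simp add: mult.assoc[symmetric] iota_mult[symmetric] iota_one)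
  also have "\<dots> = \<iota> (1 / c0)"
    using c0 fc[of c0] by simp
  finally have "f 1 = \<iota> (1 / c0)" .
  then have "x = \<iota> (c1 / c0)"
    using c1 fc[of c1] by (simp add: iota_mult[symmetric])
  then show ?thesis ..
qed

lemma mat_map_d_mult_A0:
  assumes "\<And>p q. M p q \<in> A 0"
  shows "mat_map d (mat_mult M N) = mat_mult (mat_map d M) N + mat_mult M (mat_map d N)"
  by (simp add: fun_eq_iff mat_map_def mat_mult_def d.f_sum d_mult[OF assms] sum.distrib)

lemma mat_map_d_mult_A1:
  assumes "\<And>p q. M p q \<in> A 1"
  shows "mat_map d (mat_mult M N) = mat_mult (mat_map d M) N - mat_mult M (mat_map d N)"
  by (simp add: fun_eq_iff mat_map_def mat_mult_def d.f_sum d_mult[OF assms] sum_subtractf)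

lemma mat_map_d_d: "mat_map d (mat_map d M) = 0"
  by (simp add: fun_eq_iff mat_map_def d_d)

lemma twisted_diff_add:
  "twisted_diff d \<omega>1 \<omega>2 (a + b) = twisted_diff d \<omega>1 \<omega>2 a + twisted_diff d \<omega>1 \<omega>2 b"
  by (simp add: twisted_diff_def d.mat_map_add mat_mult_distribs)

lemma twisted_diff_diff:
  "twisted_diff d \<omega>1 \<omega>2 (a - b) = twisted_diff d \<omega>1 \<omega>2 a - twisted_diff d \<omega>1 \<omega>2 b"
  by (simp add: twisted_diff_def d.mat_map_diff mat_mult_distribs)

lemma maurer_cartan:
  assumes "Fnil_obj \<iota> A d W \<omega>" and "(2::'k) \<noteq> 0"
  shows "mat_map d \<omega> = - mat_mult \<omega> \<omega>"
proof -
  have "\<iota> (1/2) * (m + m) = m" for m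
  proof -
    have "\<iota> (1/2) * (m + m) = (\<iota> (1/2) + \<iota> (1/2)) * m"
      by (simp only: distrib_left distrib_right)
    also have "\<dots> = m"
      using assms(2) by (simp flip: iota_add add: iota_one)
    finally show ?thesis .
  qed
  then show ?thesis
    using assms(1)
    by (auto simp: fun_eq_iff Fnil_obj_def mat_bracket_def mat_map_def eq_neg_iff_add_eq_0)
qed

text \<open>The twisted differential of Maurer--Cartan elements squares to zero.\<close>

lemma d_twisted_diff:
  assumes "\<And>p q. a p q \<in> A 0" "\<And>p q. \<omega>1 p q \<in> A 1" "\<And>p q. \<omega>2 p q \<in> A 1"
    and "mat_map d \<omega>1 = - mat_mult \<omega>1 \<omega>1" "mat_map d \<omega>2 = - mat_mult \<omega>2 \<omega>2"
  shows "mat_map d (twisted_diff d \<omega>1 \<omega>2 a) =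
    - mat_mult \<omega>1 (twisted_diff d \<omega>1 \<omega>2 a) - mat_mult (twisted_diff d \<omega>1 \<omega>2 a) \<omega>2"
  using assms unfolding twisted_diff_def
  by (simp add: d.mat_map_add d.mat_map_diff mat_map_d_d mat_map_d_mult_A0 mat_map_d_mult_A1
      mat_mult_distribs mat_mult_assoc algebra_simps)

lemma tensor_mult_graded:
  assumes "M \<in> tensor \<iota> (A i) (W_End W k)" "N \<in> tensor \<iota> (A j) (W_End W l)"
    and "i + j = i'" "k + l = k'"
  shows "mat_mult M N \<in> tensor \<iota> (A i') (W_End W k')"
  using assms(3,4) by (intro tensor_mult[OF assms(1,2)]) (auto intro: A_mult W_End_mult)

lemma mat_id_tensor: "mat_id \<in> tensor \<iota> (A 0) (W_End W 0)"
proof -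
  have "mat_id = elem_tensor \<iota> 1 mat_id"
    by (simp add: fun_eq_iff mat_id_def iota_one)
  also have "\<dots> \<in> tensor \<iota> (A 0) (W_End W 0)"
    by (rule tensor_elem[OF one_A mat_id_W_End])
  finally show ?thesis .
qed

lemma mat_map_d_mat_id: "mat_map d mat_id = 0"
  by (simp add: fun_eq_iff mat_map_def mat_id_def d_one)

lemma Fnil_gr_hom_subset:
  assumes "incr_filtration W"
  shows "Fnil_gr_hom \<iota> A d W \<omega>1 \<omega>2 \<subseteq> Fnil_hom \<iota> A d W \<omega>1 \<omega>2"
proof
  fix a assume "a \<in> Fnil_gr_hom \<iota> A d W \<omega>1 \<omega>2"
  then have "a - mat_id \<in> tensor \<iota> (A 0) (W_End W (-1))" and td: "twisted_diff d \<omega>1 \<omega>2 a = 0"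
    unfolding Fnil_gr_hom_iff by auto
  then have "a - mat_id \<in> tensor \<iota> (A 0) (W_End W 0)"
    using tensor_W_End_mono[OF assms] by simp
  then have "(a - mat_id) + mat_id \<in> tensor \<iota> (A 0) (W_End W 0)"
    by (rule tensor_add[OF _ mat_id_tensor])
  then show "a \<in> Fnil_hom \<iota> A d W \<omega>1 \<omega>2"
    using td unfolding Fnil_hom_iff by simp
qed

end

subsection \<open>Comparison of the categories along \<open>\<phi>\<close>\<close>

locale Fnil_comparison =
  D1: dga_alg \<iota>1 A1 d1 + D2: dga_alg \<iota>2 A2 d2
  for \<iota>1 :: "'k::field \<Rightarrow> 'a::ring_1" and A1 d1 and \<iota>2 :: "'k \<Rightarrow> 'b::ring_1" and A2 d2 +
  fixes \<phi> :: "'a \<Rightarrow> 'b" and W :: "int \<Rightarrow> ('n::finite \<Rightarrow> 'k) set"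
  assumes connected2: "cohom_connected \<iota>2 A2 d2"
    and hom: "dga_hom \<iota>1 A1 d1 \<iota>2 A2 d2 \<phi>"
    and H0_iso: "induces_cohom_iso A1 d1 A2 d2 \<phi> 0"
    and H1_iso: "induces_cohom_iso A1 d1 A2 d2 \<phi> 1"
    and filtration: "incr_filtration W"
    and char_ne_2: "(2::'k) \<noteq> 0"
begin

abbreviation WE :: "int \<Rightarrow> ('n \<Rightarrow> 'n \<Rightarrow> 'k) set" where
  "WE k \<equiv> W_End W k"

lemma phi_A: "x \<in> A1 i \<Longrightarrow> \<phi> x \<in> A2 i"
  and phi_d: "\<phi> (d1 x) = d2 (\<phi> x)"
  and phi_one: "\<phi> 1 = 1"
  and phi_iota: "\<phi> (\<iota>1 c) = \<iota>2 c"
  using hom unfolding dga_hom_def by blast+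

sublocale phi: scalar_ring_hom \<iota>1 \<iota>2 \<phi>
  using hom by unfold_locales (auto simp: dga_hom_def)

lemma mat_map_phi_tensor: "M \<in> tensor \<iota>1 (A1 i) T \<Longrightarrow> mat_map \<phi> M \<in> tensor \<iota>2 (A2 i) T"
  by (rule phi.tensor_mat_map[OF _ phi_A])

lemma mat_map_phi_d: "mat_map \<phi> (mat_map d1 M) = mat_map d2 (mat_map \<phi> M)"
  by (simp add: fun_eq_iff mat_map_def phi_d)

lemma mat_map_phi_twisted_diff:
  "mat_map \<phi> (twisted_diff d1 \<omega>1 \<omega>2 a) = twisted_diff d2 (mat_map \<phi> \<omega>1) (mat_map \<phi> \<omega>2) (mat_map \<phi> a)"
  by (simp only: twisted_diff_def phi.mat_map_add phi.mat_map_diff phi.mat_map_mult mat_map_phi_d)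

lemma mat_map_phi_mat_id: "mat_map \<phi> mat_id = mat_id"
  by (simp add: fun_eq_iff mat_map_def mat_id_def phi_one)

lemma Fnil_objD:
  assumes "Fnil_obj \<iota>1 A1 d1 W \<omega>"
  shows "\<omega> \<in> tensor \<iota>1 (A1 1) (WE (-1))" "\<And>p q. \<omega> p q \<in> A1 1"
    "mat_map d1 \<omega> = - mat_mult \<omega> \<omega>" "mat_map \<phi> \<omega> \<in> tensor \<iota>2 (A2 1) (WE (-1))"
proof -
  show \<omega>: "\<omega> \<in> tensor \<iota>1 (A1 1) (WE (-1))"
    using assms unfolding Fnil_obj_def by blast
  show "\<omega> p q \<in> A1 1" for p q
    by (rule D1.tensor_entry[OF \<omega> D1.iota_closed_A])
  show "mat_map d1 \<omega> = - mat_mult \<omega> \<omega>"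
    by (rule D1.maurer_cartan[OF assms char_ne_2])
  show "mat_map \<phi> \<omega> \<in> tensor \<iota>2 (A2 1) (WE (-1))"
    by (rule mat_map_phi_tensor[OF \<omega>])
qed

lemma mat_map_Fnil_hom:
  "a \<in> Fnil_hom \<iota>1 A1 d1 W \<omega>1 \<omega>2 \<Longrightarrow> mat_map \<phi> a \<in> Fnil_hom \<iota>2 A2 d2 W (mat_map \<phi> \<omega>1) (mat_map \<phi> \<omega>2)"
  unfolding Fnil_hom_iff mat_map_phi_twisted_diff[symmetric] by (auto intro: mat_map_phi_tensor)

lemma mat_map_Fnil_gr_hom:
  assumes "a \<in> Fnil_gr_hom \<iota>1 A1 d1 W \<omega>1 \<omega>2"
  shows "mat_map \<phi> a \<in> Fnil_gr_hom \<iota>2 A2 d2 W (mat_map \<phi> \<omega>1) (mat_map \<phi> \<omega>2)"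
proof -
  have "a - mat_id \<in> tensor \<iota>1 (A1 0) (WE (-1))" "twisted_diff d1 \<omega>1 \<omega>2 a = 0"
    using assms unfolding Fnil_gr_hom_iff by auto
  moreover have "mat_map \<phi> a - mat_id = mat_map \<phi> (a - mat_id)"
    by (simp only: phi.mat_map_diff mat_map_phi_mat_id)
  ultimately show ?thesis
    unfolding Fnil_gr_hom_iff mat_map_phi_twisted_diff[symmetric]
    using mat_map_phi_tensor by simp
qed

text \<open>The coordinates of \<open>M\<close> modulo \<open>WE k'\<close> are \<open>d1\<close>-closed of degree 0 and killed by \<open>\<phi>\<close>,
  hence zero by injectivity on \<open>H\<^sup>0\<close>.\<close>

lemma tensor_lower_by_H0:
  assumes M: "M \<in> tensor \<iota>1 (A1 0) (WE k)" and "k' \<le> k"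
    and dM: "mat_map d1 M \<in> tensor \<iota>1 UNIV (WE k')" and phiM: "mat_map \<phi> M \<in> tensor \<iota>2 UNIV (WE k')"
  shows "M \<in> tensor \<iota>1 (A1 0) (WE k')"
proof -
  obtain U L where cc: "complement_coords (WE k') (WE k) U L"
    using W_End_complement_coords[OF filtration \<open>k' \<le> k\<close>] .
  then have L: "mat_linear (L u)" for u
    by (simp add: complement_coords_def)
  show ?thesis
  proof (rule D1.tensor_lower_if_contract_zero[OF cc M])
    fix u assume u: "u \<in> U"
    let ?x = "contract \<iota>1 (L u) M"
    have "?x \<in> A1 0"
      by (rule D1.contract_mem[OF M D1.iota_closed_A L])
    moreover have "d1 ?x = 0"
      using D1.contract_coords_vanish[OF cc u dM] by (simp add: D1.d.f_contract)
    moreover have "\<phi> ?x = 0"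
      using D2.contract_coords_vanish[OF cc u phiM] by (simp add: phi.f_contract)
    ultimately show "?x = 0"
      using H0_iso unfolding induces_cohom_iso_def cocycles_def by simp
  qed
qed

lemma Fnil_hom_kernel:
  assumes o1: "Fnil_obj \<iota>1 A1 d1 W \<omega>1" and o2: "Fnil_obj \<iota>1 A1 d1 W \<omega>2"
    and M: "M \<in> tensor \<iota>1 (A1 0) (WE 0)"
    and dM: "twisted_diff d1 \<omega>1 \<omega>2 M = 0" and phiM: "mat_map \<phi> M = 0"
  shows "M = 0"
proof -
  have "M \<in> tensor \<iota>1 (A1 0) (WE (- int m))" for m
  proof (induction m)
    case 0
    show ?case
      using M by simp
  next
    case (Suc m)
    have "mat_map d1 M = mat_mult M \<omega>2 - mat_mult \<omega>1 M"
      using dM unfolding twisted_diff_def by (simp add: algebra_simps)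
    also have "\<dots> \<in> tensor \<iota>1 (A1 1) (WE (- int m - 1))"
      using Fnil_objD(1)[OF o1] Fnil_objD(1)[OF o2] Suc.IH
      by (intro D1.tensor_diff D1.A_neg D1.tensor_mult_graded) auto
    finally have "mat_map d1 M \<in> tensor \<iota>1 UNIV (WE (- int m - 1))"
      by (rule D1.tensor_UNIV)
    then have "M \<in> tensor \<iota>1 (A1 0) (WE (- int m - 1))"
      using phiM by (intro tensor_lower_by_H0[OF Suc.IH]) simp_all
    moreover have "- int m - 1 = - int (Suc m)"
      by simp
    ultimately show ?case
      by simp
  qed
  moreover obtain N :: nat where "\<And>k. k \<le> - int N \<Longrightarrow> WE k \<subseteq> {0}"
    using W_End_eventually_zero[OF filtration] by blast
  ultimately show "M = 0"
    using D1.tensor_eq_zero by blast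
qed

lemma mat_map_Fnil_hom_inj:
  assumes "Fnil_obj \<iota>1 A1 d1 W \<omega>1" "Fnil_obj \<iota>1 A1 d1 W \<omega>2"
  shows "inj_on (mat_map \<phi>) (Fnil_hom \<iota>1 A1 d1 W \<omega>1 \<omega>2)"
proof (rule inj_onI)
  fix a a' assume "a \<in> Fnil_hom \<iota>1 A1 d1 W \<omega>1 \<omega>2" "a' \<in> Fnil_hom \<iota>1 A1 d1 W \<omega>1 \<omega>2"
    and "mat_map \<phi> a = mat_map \<phi> a'"
  then have "a - a' \<in> tensor \<iota>1 (A1 0) (WE 0)" "twisted_diff d1 \<omega>1 \<omega>2 (a - a') = 0"
    "mat_map \<phi> (a - a') = 0"
    unfolding Fnil_hom_iff D1.twisted_diff_diff phi.mat_map_diff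
    by (auto intro: D1.tensor_diff D1.A_neg)
  then have "a - a' = 0"
    by (rule Fnil_hom_kernel[OF assms])
  then show "a = a'"
    by simp
qed

context
  fixes \<omega>1 \<omega>2 b
  assumes o1: "Fnil_obj \<iota>1 A1 d1 W \<omega>1" and o2: "Fnil_obj \<iota>1 A1 d1 W \<omega>2"
    and b: "b \<in> Fnil_hom \<iota>2 A2 d2 W (mat_map \<phi> \<omega>1) (mat_map \<phi> \<omega>2)"
begin

abbreviation defect :: "('n \<Rightarrow> 'n \<Rightarrow> 'a) \<Rightarrow> ('n \<Rightarrow> 'n \<Rightarrow> 'a)" where
  "defect a \<equiv> twisted_diff d1 \<omega>1 \<omega>2 a"

abbreviation error :: "('n \<Rightarrow> 'n \<Rightarrow> 'a) \<Rightarrow> ('n \<Rightarrow> 'n \<Rightarrow> 'b)" where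
  "error a \<equiv> b - mat_map \<phi> a"

lemma mat_map_defect:
  "mat_map \<phi> (defect a) = - twisted_diff d2 (mat_map \<phi> \<omega>1) (mat_map \<phi> \<omega>2) (error a)"
  using b unfolding Fnil_hom_iff by (simp add: D2.twisted_diff_diff mat_map_phi_twisted_diff)

lemma d_error:
  assumes "defect a \<in> tensor \<iota>1 (A1 1) (WE (k - 1))" and "error a \<in> tensor \<iota>2 (A2 0) (WE k)"
  shows "mat_map d2 (error a) \<in> tensor \<iota>2 UNIV (WE (k - 1))"
proof -
  have "mat_map d2 (error a) =
      - mat_map \<phi> (defect a) - mat_mult (mat_map \<phi> \<omega>1) (error a) + mat_mult (error a) (mat_map \<phi> \<omega>2)"
    by (simp only: mat_map_defect) (simp add: twisted_diff_def algebra_simps)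
  also have "\<dots> \<in> tensor \<iota>2 UNIV (WE (k - 1))"
  proof -
    have "mat_map \<phi> (defect a) \<in> tensor \<iota>2 UNIV (WE (k - 1))"
      by (rule D2.tensor_UNIV[OF mat_map_phi_tensor[OF assms(1)]])
    moreover have "mat_mult (mat_map \<phi> \<omega>1) (error a) \<in> tensor \<iota>2 UNIV (WE (k - 1))"
      by (rule D2.tensor_UNIV[OF D2.tensor_mult_graded[OF Fnil_objD(4)[OF o1] assms(2)]]) simp_all
    moreover have "mat_mult (error a) (mat_map \<phi> \<omega>2) \<in> tensor \<iota>2 UNIV (WE (k - 1))"
      by (rule D2.tensor_UNIV[OF D2.tensor_mult_graded[OF assms(2) Fnil_objD(4)[OF o2]]]) simp_all
    ultimately show ?thesis
      by (intro D2.tensor_add D2.tensor_diff D2.tensor_neg) simp_all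
  qed
  finally show ?thesis .
qed

text \<open>Closed of degree 0, hence a constant by connectedness of \<open>A2\<close>.\<close>

lemma error_coord_eq_iota:
  assumes cc: "complement_coords (WE (k - 1)) (WE k) U L" and u: "u \<in> U"
    and c: "defect a \<in> tensor \<iota>1 (A1 1) (WE (k - 1))" and e: "error a \<in> tensor \<iota>2 (A2 0) (WE k)"
  shows "\<exists>c. contract \<iota>2 (L u) (error a) = \<iota>2 c"
proof -
  have L: "mat_linear (L u)"
    using cc by (simp add: complement_coords_def)
  have "d2 (contract \<iota>2 (L u) (error a)) = 0"
    using D2.contract_coords_vanish[OF cc u d_error[OF c e]] by (simp add: D2.d.f_contract)
  then show ?thesis
    using D2.closed_A0_eq_iota[OF connected2 D2.contract_mem[OF e D2.iota_closed_A L]] by metis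
qed

lemma reduce_error_weight:
  assumes a: "a \<in> tensor \<iota>1 (A1 0) (WE 0)" and "k \<le> 0"
    and e: "error a \<in> tensor \<iota>2 (A2 0) (WE k)" and c: "defect a \<in> tensor \<iota>1 (A1 1) (WE (k - 1))"
  obtains a' where "a' \<in> tensor \<iota>1 (A1 0) (WE 0)" "error a' \<in> tensor \<iota>2 (A2 0) (WE (k - 1))"
    "defect a' \<in> tensor \<iota>1 (A1 1) (WE (k - 1))"
proof -
  obtain U L where cc: "complement_coords (WE (k - 1)) (WE k) U L"
    using W_End_complement_coords[OF filtration, of "k - 1" k] by auto
  then have U: "U \<subseteq> WE k"
    by (simp add: complement_coords_def)
  obtain \<kappa> where \<kappa>: "\<And>u. u \<in> U \<Longrightarrow> contract \<iota>2 (L u) (error a) = \<iota>2 (\<kappa> u)"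
    using error_coord_eq_iota[OF cc _ c e] by metis
  define G where "G = (\<Sum>u\<in>U. elem_tensor \<iota>1 (\<iota>1 (\<kappa> u)) u)"
  have G: "G \<in> tensor \<iota>1 (A1 0) (WE k)"
    unfolding G_def using U by (intro D1.tensor_sum D1.tensor_elem D1.iota_in_A0) auto
  have dG: "mat_map d1 G = 0"
    unfolding G_def D1.d.mat_map_sum
    by (rule sum.neutral) (simp add: D1.d.mat_map_elem_tensor D1.d_iota)
  have phiG: "mat_map \<phi> G = (\<Sum>u\<in>U. elem_tensor \<iota>2 (contract \<iota>2 (L u) (error a)) u)"
    unfolding G_def phi.mat_map_sum
    by (rule sum.cong) (simp_all add: phi.mat_map_elem_tensor phi_iota \<kappa>)
  show ?thesis
  proof
    show "a + G \<in> tensor \<iota>1 (A1 0) (WE 0)"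
      by (rule D1.tensor_add[OF a D1.tensor_W_End_mono[OF filtration G \<open>k \<le> 0\<close>]])
    have "error (a + G) = error a - (\<Sum>u\<in>U. elem_tensor \<iota>2 (contract \<iota>2 (L u) (error a)) u)"
      by (simp only: phi.mat_map_add phiG diff_diff_eq)
    also have "\<dots> \<in> tensor \<iota>2 (A2 0) (WE (k - 1))"
      by (rule D2.tensor_sub_contract_coords[OF cc e])
    finally show "error (a + G) \<in> tensor \<iota>2 (A2 0) (WE (k - 1))" .
    have "defect (a + G) = defect a + (mat_mult \<omega>1 G - mat_mult G \<omega>2)"
      by (simp only: D1.twisted_diff_add) (simp add: twisted_diff_def dG)
    also have "\<dots> \<in> tensor \<iota>1 (A1 1) (WE (k - 1))"
      using Fnil_objD(1)[OF o1] Fnil_objD(1)[OF o2] G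
      by (intro D1.tensor_add[OF c] D1.tensor_diff D1.A_neg D1.tensor_mult_graded) auto
    finally show "defect (a + G) \<in> tensor \<iota>1 (A1 1) (WE (k - 1))" .
  qed
qed

lemma d_defect:
  assumes a: "a \<in> tensor \<iota>1 (A1 0) (WE 0)" and c: "defect a \<in> tensor \<iota>1 (A1 1) (WE k)"
  shows "mat_map d1 (defect a) \<in> tensor \<iota>1 UNIV (WE (k - 1))"
proof -
  have "mat_map d1 (defect a) = - mat_mult \<omega>1 (defect a) - mat_mult (defect a) \<omega>2"
    using D1.tensor_entry[OF a D1.iota_closed_A] Fnil_objD(2,3)[OF o1] Fnil_objD(2,3)[OF o2]
    by (intro D1.d_twisted_diff)
  moreover have "mat_mult \<omega>1 (defect a) \<in> tensor \<iota>1 (A1 2) (WE (k - 1))"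
    "mat_mult (defect a) \<omega>2 \<in> tensor \<iota>1 (A1 2) (WE (k - 1))"
    using Fnil_objD(1)[OF o1] Fnil_objD(1)[OF o2] c by (auto intro: D1.tensor_mult_graded)
  ultimately show ?thesis
    by (simp only:) (intro D1.tensor_diff D1.tensor_neg; auto intro: D1.tensor_UNIV)
qed

lemma phi_defect_coord:
  assumes cc: "complement_coords (WE (k - 1)) (WE k) U L" and u: "u \<in> U"
    and e: "error a \<in> tensor \<iota>2 (A2 0) (WE k)"
  shows "\<phi> (contract \<iota>1 (L u) (defect a)) = d2 (- contract \<iota>2 (L u) (error a))"
proof -
  have zeros: "contract \<iota>2 (L u) (mat_mult (mat_map \<phi> \<omega>1) (error a)) = 0"
    "contract \<iota>2 (L u) (mat_mult (error a) (mat_map \<phi> \<omega>2)) = 0"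
    using Fnil_objD(4)[OF o1] Fnil_objD(4)[OF o2] e
    by (auto intro!: D2.contract_coords_vanish[OF cc u] D2.tensor_mult_graded)
  have "\<phi> (contract \<iota>1 (L u) (defect a))
      = contract \<iota>2 (L u) (- twisted_diff d2 (mat_map \<phi> \<omega>1) (mat_map \<phi> \<omega>2) (error a))"
    by (simp only: phi.f_contract mat_map_defect)
  also have "\<dots> = - (contract \<iota>2 (L u) (mat_map d2 (error a))
      + contract \<iota>2 (L u) (mat_mult (mat_map \<phi> \<omega>1) (error a))
      - contract \<iota>2 (L u) (mat_mult (error a) (mat_map \<phi> \<omega>2)))"
    by (simp only: twisted_diff_def contract_neg contract_add contract_diff)
  also have "\<dots> = d2 (- contract \<iota>2 (L u) (error a))"
    by (simp only: zeros D2.d.f_contract[symmetric] D2.d.f_minus add_0_right diff_0_right)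
  finally show ?thesis .
qed

text \<open>A 1-cocycle whose image is a coboundary, hence itself a coboundary by injectivity on
  \<open>H\<^sup>1\<close>.\<close>

lemma defect_coord_exact:
  assumes cc: "complement_coords (WE (k - 1)) (WE k) U L" and u: "u \<in> U"
    and a: "a \<in> tensor \<iota>1 (A1 0) (WE 0)"
    and e: "error a \<in> tensor \<iota>2 (A2 0) (WE k)" and c: "defect a \<in> tensor \<iota>1 (A1 1) (WE k)"
  shows "\<exists>g\<in>A1 0. contract \<iota>1 (L u) (defect a) = d1 g"
proof -
  have L: "mat_linear (L u)"
    using cc by (simp add: complement_coords_def)
  have "contract \<iota>1 (L u) (defect a) \<in> cocycles A1 d1 1"
    using D1.contract_mem[OF c D1.iota_closed_A L] D1.contract_coords_vanish[OF cc u d_defect[OF a c]]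
    by (simp add: cocycles_def D1.d.f_contract)
  moreover have "- contract \<iota>2 (L u) (error a) \<in> A2 0"
    using D2.contract_mem[OF e D2.iota_closed_A L] by (rule D2.A_neg)
  ultimately have "contract \<iota>1 (L u) (defect a) \<in> coboundaries A1 d1 1"
    using H1_iso phi_defect_coord[OF cc u e] unfolding induces_cohom_iso_def by auto
  then show ?thesis
    by auto
qed

lemma reduce_defect_weight:
  assumes a: "a \<in> tensor \<iota>1 (A1 0) (WE 0)" and "k \<le> 0"
    and e: "error a \<in> tensor \<iota>2 (A2 0) (WE k)" and c: "defect a \<in> tensor \<iota>1 (A1 1) (WE k)"
  obtains a' where "a' \<in> tensor \<iota>1 (A1 0) (WE 0)" "error a' \<in> tensor \<iota>2 (A2 0) (WE k)"
    "defect a' \<in> tensor \<iota>1 (A1 1) (WE (k - 1))"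
proof -
  obtain U L where cc: "complement_coords (WE (k - 1)) (WE k) U L"
    using W_End_complement_coords[OF filtration, of "k - 1" k] by auto
  then have U: "U \<subseteq> WE k"
    by (simp add: complement_coords_def)
  obtain g where g: "\<And>u. u \<in> U \<Longrightarrow> g u \<in> A1 0"
    "\<And>u. u \<in> U \<Longrightarrow> contract \<iota>1 (L u) (defect a) = d1 (g u)"
    using defect_coord_exact[OF cc _ a e c] by metis
  define H where "H = (\<Sum>u\<in>U. elem_tensor \<iota>1 (g u) u)"
  have H: "H \<in> tensor \<iota>1 (A1 0) (WE k)"
    unfolding H_def using U g(1) by (intro D1.tensor_sum D1.tensor_elem) auto
  have dH: "mat_map d1 H = (\<Sum>u\<in>U. elem_tensor \<iota>1 (contract \<iota>1 (L u) (defect a)) u)"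
    unfolding H_def D1.d.mat_map_sum
    by (rule sum.cong) (simp_all add: D1.d.mat_map_elem_tensor g(2))
  show ?thesis
  proof
    show "a - H \<in> tensor \<iota>1 (A1 0) (WE 0)"
      by (rule D1.tensor_diff[OF D1.A_neg a D1.tensor_W_End_mono[OF filtration H \<open>k \<le> 0\<close>]])
    have "error (a - H) = error a + mat_map \<phi> H"
      by (simp add: phi.mat_map_diff algebra_simps)
    also have "\<dots> \<in> tensor \<iota>2 (A2 0) (WE k)"
      by (rule D2.tensor_add[OF e mat_map_phi_tensor[OF H]])
    finally show "error (a - H) \<in> tensor \<iota>2 (A2 0) (WE k)" .
    have "defect (a - H) = (defect a - mat_map d1 H) - (mat_mult \<omega>1 H - mat_mult H \<omega>2)"
      by (simp only: D1.twisted_diff_diff) (simp add: twisted_diff_def)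
    also have "\<dots> \<in> tensor \<iota>1 (A1 1) (WE (k - 1))"
      unfolding dH using Fnil_objD(1)[OF o1] Fnil_objD(1)[OF o2] H
      by (intro D1.tensor_diff D1.A_neg D1.tensor_sub_contract_coords[OF cc c] D1.tensor_mult_graded)
        auto
    finally show "defect (a - H) \<in> tensor \<iota>1 (A1 1) (WE (k - 1))" .
  qed
qed

lemma approx_preimage:
  "\<exists>a. a \<in> tensor \<iota>1 (A1 0) (WE 0) \<and> error a \<in> tensor \<iota>2 (A2 0) (WE (- int m)) \<and>
     defect a \<in> tensor \<iota>1 (A1 1) (WE (- int m - 1))"
proof (induction m)
  case 0
  show ?case
  proof (intro exI conjI)
    show "0 \<in> tensor \<iota>1 (A1 0) (WE 0)"
      by (rule D1.tensor_zero)
    show "error 0 \<in> tensor \<iota>2 (A2 0) (WE (- int 0))"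
      using b unfolding Fnil_hom_iff by (simp only: phi.mat_map_zero diff_zero of_nat_0 minus_zero)
    show "defect 0 \<in> tensor \<iota>1 (A1 1) (WE (- int 0 - 1))"
      by (simp only: twisted_diff_def D1.d.mat_map_zero mat_mult_zero_left mat_mult_zero_right
          add_0 diff_zero D1.tensor_zero)
  qed
next
  case (Suc m)
  then obtain a where a: "a \<in> tensor \<iota>1 (A1 0) (WE 0)" "error a \<in> tensor \<iota>2 (A2 0) (WE (- int m))"
    "defect a \<in> tensor \<iota>1 (A1 1) (WE (- int m - 1))"
    by blast
  obtain a1 where a1: "a1 \<in> tensor \<iota>1 (A1 0) (WE 0)" "error a1 \<in> tensor \<iota>2 (A2 0) (WE (- int m - 1))"
    "defect a1 \<in> tensor \<iota>1 (A1 1) (WE (- int m - 1))"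
    by (rule reduce_error_weight[OF a(1) _ a(2,3)]) simp_all
  obtain a2 where "a2 \<in> tensor \<iota>1 (A1 0) (WE 0)" "error a2 \<in> tensor \<iota>2 (A2 0) (WE (- int m - 1))"
    "defect a2 \<in> tensor \<iota>1 (A1 1) (WE (- int m - 1 - 1))"
    by (rule reduce_defect_weight[OF a1(1) _ a1(2,3)]) simp_all
  moreover have "- int (Suc m) = - int m - 1"
    by simp
  ultimately show ?case
    by (metis diff_diff_eq)
qed

lemma Fnil_hom_preimage: "\<exists>a \<in> Fnil_hom \<iota>1 A1 d1 W \<omega>1 \<omega>2. mat_map \<phi> a = b"
proof -
  obtain N :: nat where N: "\<And>k. k \<le> - int N \<Longrightarrow> WE k \<subseteq> {0}"
    using W_End_eventually_zero[OF filtration] by blast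
  obtain a where a: "a \<in> tensor \<iota>1 (A1 0) (WE 0)" and e: "error a \<in> tensor \<iota>2 (A2 0) (WE (- int N))"
    and c: "defect a \<in> tensor \<iota>1 (A1 1) (WE (- int N - 1))"
    using approx_preimage by blast
  have "defect a = 0"
    by (rule D1.tensor_eq_zero[OF c N]) simp
  then have "a \<in> Fnil_hom \<iota>1 A1 d1 W \<omega>1 \<omega>2"
    using a unfolding Fnil_hom_iff by simp
  moreover have "error a = 0"
    by (rule D2.tensor_eq_zero[OF e N]) simp
  ultimately show ?thesis
    by auto
qed

end

lemma Fnil_gr_hom_preimage:
  assumes o1: "Fnil_obj \<iota>1 A1 d1 W \<omega>1" and o2: "Fnil_obj \<iota>1 A1 d1 W \<omega>2"
    and b: "b \<in> Fnil_gr_hom \<iota>2 A2 d2 W (mat_map \<phi> \<omega>1) (mat_map \<phi> \<omega>2)"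
  shows "\<exists>a \<in> Fnil_gr_hom \<iota>1 A1 d1 W \<omega>1 \<omega>2. mat_map \<phi> a = b"
proof -
  obtain a where a: "a \<in> Fnil_hom \<iota>1 A1 d1 W \<omega>1 \<omega>2" and ab: "mat_map \<phi> a = b"
    using Fnil_hom_preimage[OF o1 o2] b D2.Fnil_gr_hom_subset[OF filtration] by blast
  then have a0: "a \<in> tensor \<iota>1 (A1 0) (WE 0)" and da: "twisted_diff d1 \<omega>1 \<omega>2 a = 0"
    unfolding Fnil_hom_iff by auto
  have "mat_map d1 (a - mat_id) = mat_mult a \<omega>2 - mat_mult \<omega>1 a"
    using da by (simp add: D1.d.mat_map_diff D1.mat_map_d_mat_id twisted_diff_def algebra_simps)
  also have "\<dots> \<in> tensor \<iota>1 (A1 1) (WE (0 - 1))"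
    using Fnil_objD(1)[OF o1] Fnil_objD(1)[OF o2] a0
    by (intro D1.tensor_diff D1.A_neg D1.tensor_mult_graded) auto
  finally have d: "mat_map d1 (a - mat_id) \<in> tensor \<iota>1 UNIV (WE (0 - 1))"
    by (rule D1.tensor_UNIV)
  have p: "mat_map \<phi> (a - mat_id) \<in> tensor \<iota>2 UNIV (WE (0 - 1))"
    using b ab unfolding Fnil_gr_hom_iff
    by (auto simp: phi.mat_map_diff mat_map_phi_mat_id intro: D2.tensor_UNIV)
  have "a - mat_id \<in> tensor \<iota>1 (A1 0) (WE 0)"
    by (rule D1.tensor_diff[OF D1.A_neg a0 D1.mat_id_tensor])
  then have "a - mat_id \<in> tensor \<iota>1 (A1 0) (WE (0 - 1))"
    by (rule tensor_lower_by_H0[OF _ _ d p]) simp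
  then have "a \<in> Fnil_gr_hom \<iota>1 A1 d1 W \<omega>1 \<omega>2"
    using da unfolding Fnil_gr_hom_iff by simp
  then show ?thesis
    using ab by blast
qed

lemma Fnil_hom_bij:
  assumes "Fnil_obj \<iota>1 A1 d1 W \<omega>1" "Fnil_obj \<iota>1 A1 d1 W \<omega>2"
  shows "bij_betw (mat_map \<phi>) (Fnil_hom \<iota>1 A1 d1 W \<omega>1 \<omega>2)
    (Fnil_hom \<iota>2 A2 d2 W (mat_map \<phi> \<omega>1) (mat_map \<phi> \<omega>2))"
  unfolding bij_betw_def
  using mat_map_Fnil_hom_inj[OF assms] mat_map_Fnil_hom Fnil_hom_preimage[OF assms] by blast

lemma Fnil_gr_hom_bij:
  assumes "Fnil_obj \<iota>1 A1 d1 W \<omega>1" "Fnil_obj \<iota>1 A1 d1 W \<omega>2"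
  shows "bij_betw (mat_map \<phi>) (Fnil_gr_hom \<iota>1 A1 d1 W \<omega>1 \<omega>2)
    (Fnil_gr_hom \<iota>2 A2 d2 W (mat_map \<phi> \<omega>1) (mat_map \<phi> \<omega>2))"
  unfolding bij_betw_def
  using inj_on_subset[OF mat_map_Fnil_hom_inj[OF assms] D1.Fnil_gr_hom_subset[OF filtration]]
    mat_map_Fnil_gr_hom Fnil_gr_hom_preimage[OF assms] by blast

end

theorem proposition10p2:
  fixes \<iota>1 :: "'k::real_normed_field \<Rightarrow> 'a::ring_1" and A1 :: "nat \<Rightarrow> 'a set" and d1 :: "'a \<Rightarrow> 'a"
    and \<iota>2 :: "'k \<Rightarrow> 'b::ring_1" and A2 :: "nat \<Rightarrow> 'b set" and d2 :: "'b \<Rightarrow> 'b"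
    and \<phi> :: "'a \<Rightarrow> 'b"
    and W :: "int \<Rightarrow> ('n::finite \<Rightarrow> 'k) set"
  assumes "dga \<iota>1 A1 d1" and "dga \<iota>2 A2 d2"
    and "cohom_connected \<iota>1 A1 d1" and "cohom_connected \<iota>2 A2 d2"
    and "dga_hom \<iota>1 A1 d1 \<iota>2 A2 d2 \<phi>"
    and "induces_cohom_iso A1 d1 A2 d2 \<phi> 0" and "induces_cohom_iso A1 d1 A2 d2 \<phi> 1"
    and "incr_filtration W"
  shows "(\<forall>\<omega>1 \<omega>2. Fnil_obj \<iota>1 A1 d1 W \<omega>1 \<and> Fnil_obj \<iota>1 A1 d1 W \<omega>2 \<longrightarrow>
            bij_betw (mat_map \<phi>) (Fnil_hom \<iota>1 A1 d1 W \<omega>1 \<omega>2)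
              (Fnil_hom \<iota>2 A2 d2 W (mat_map \<phi> \<omega>1) (mat_map \<phi> \<omega>2)))
       \<and> (\<forall>\<omega>1 \<omega>2. Fnil_obj \<iota>1 A1 d1 W \<omega>1 \<and> Fnil_obj \<iota>1 A1 d1 W \<omega>2 \<longrightarrow>
            bij_betw (mat_map \<phi>) (Fnil_gr_hom \<iota>1 A1 d1 W \<omega>1 \<omega>2)
              (Fnil_gr_hom \<iota>2 A2 d2 W (mat_map \<phi> \<omega>1) (mat_map \<phi> \<omega>2)))"
proof -
  interpret Fnil_comparison \<iota>1 A1 d1 \<iota>2 A2 d2 \<phi> W
    using assms by (intro Fnil_comparison.intro Fnil_comparison_axioms.intro dga_alg_if_dga) simp_all
  show ?thesis
    using Fnil_hom_bij Fnil_gr_hom_bij by blast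
qed

end
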